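(* Let $f(x)=x^5+px^4+qx^3+rx^2+sx+t$ with real coefficients, and suppose $D=0$ and $L_1>0$ (so that $f$ has one real double root and three distinct real simple roots). Then the double root of $f$ equals $d=C_0/L_1$. Put $F_1=q+4pd+10d^2$, $F_2=r+3qd+6pd^2+10d^3$, $F_3=pq+4p^2d-24pd^2-22qd-40d^3-9r$. Then, writing the roots in increasing order: (a) if $F_1>0$, $F_2<0$, $F_3<0$: double $<$ single $<$ single $<$ single; (b) if $F_1>0$, $F_2>0$, $F_3>0$: single $<$ single $<$ single $<$ double; (c) if $F_2>0$ and ($F_1\le0$ or $F_3\le 0$): single $<$ double $<$ single $<$ single; (d) if $F_2<0$ and ($F_1\le 0$ or $F_3\ge0$): single $<$ single $<$ double $<$ single.
   Context: Let $\alpha_1,\dots,\alpha_5\in\mathbb{C}$ be the roots of $f$ listed with multiplicity. $D=\prod_{1\le i<j\le 5}(\alpha_i-\alpha_j)^2$ is the discriminant of $f$. $L_1=-264ps^2r-12p^3tq^2+36r^3pq-124srpq^2+28srp^3q+260sptq-132p^2qrt+240pr^2t+234sqr^2+32p^4tr+48ptq^3-56sp^3t-80q^2rt+194qs^2p^2-600str-6q^3sp^2+2p^2q^2r^2-12sr^2p^2-54r^4+320s^3-8q^3r^2-8r^3p^3+250qt^2-176q^2s^2+24q^4s-36p^4s^2-100p^2t^2$. $C_0=48sp^4t+4sp^3r^2+80p^3t^2-32p^3rqt-3p^3s^2q+7s^2p^2r-p^2srq^2-4p^2r^2t+9p^2tq^3-266sqp^2t+16ps^3+146ptrq^2-18spr^2q+290sptr-275pqt^2+12ps^2q^2+4sq^3r-195r^2qt+260sq^2t+27sr^3+375t^2r-36q^4t-48rs^2q-400ts^2$.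 (Note $f(y+d)=y^2\,(y^3+(p+5d)y^2+F_1y+F_2)$, and $F_3=(p+5d)F_1-9F_2$.) *)

theory Defs
  imports Complex_Main
begin

definition quintic :: "'a::comm_ring_1 \<Rightarrow> 'a \<Rightarrow> 'a \<Rightarrow> 'a \<Rightarrow> 'a \<Rightarrow> 'a \<Rightarrow> 'a" where
  "quintic p q r s t x = x^5 + p*x^4 + q*x^3 + r*x^2 + s*x + t"

text \<open>Discriminant of a monic quintic in terms of its roots alpha 0..4 listed with multiplicity.\<close>
definition disc_roots5 :: "(nat \<Rightarrow> complex) \<Rightarrow> complex" where
  "disc_roots5 \<alpha> = (\<Prod>i<5. \<Prod>j\<in>{i<..<5}. (\<alpha> i - \<alpha> j)^2)"

definition L1 :: "real \<Rightarrow> real \<Rightarrow> real \<Rightarrow> real \<Rightarrow> real \<Rightarrow> real" where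
  "L1 p q r s t = -264*p*s^2*r-12*p^3*t*q^2+36*r^3*p*q-124*s*r*p*q^2+28*s*r*p^3*q+260*s*p*t*q-132*p^2*q*r*t+240*p*r^2*t+234*s*q*r^2+32*p^4*t*r+48*p*t*q^3-56*s*p^3*t-80*q^2*r*t+194*q*s^2*p^2-600*s*t*r-6*q^3*s*p^2+2*p^2*q^2*r^2-12*s*r^2*p^2-54*r^4+320*s^3-8*q^3*r^2-8*r^3*p^3+250*q*t^2-176*q^2*s^2+24*q^4*s-36*p^4*s^2-100*p^2*t^2"

definition C0 :: "real \<Rightarrow> real \<Rightarrow> real \<Rightarrow> real \<Rightarrow> real \<Rightarrow> real" where
  "C0 p q r s t = 48*s*p^4*t+4*s*p^3*r^2+80*p^3*t^2-32*p^3*r*q*t-3*p^3*s^2*q+7*s^2*p^2*r-p^2*s*r*q^2-4*p^2*r^2*t+9*p^2*t*q^3-266*s*q*p^2*t+16*p*s^3+146*p*t*r*q^2-18*s*p*r^2*q+290*s*p*t*r-275*p*q*t^2+12*p*s^2*q^2+4*s*q^3*r-195*r^2*q*t+260*s*q^2*t+27*s*r^3+375*t^2*r-36*q^4*t-48*r*s^2*q-400*t*s^2"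

end

theory Submission
  imports Defs "HOL-Computational_Algebra.Polynomial"
begin

text \<open>A vanishing discriminant gives a repeated complex root \<open>\<delta>\<close>, so over \<open>\<complex>\<close> the quintic is
  \<open>(z - \<delta>)\<^sup>2 g(z)\<close> with \<open>g\<close> a monic cubic. Substituting the coefficients of this factorisation,
  \<open>L\<^sub>1 = 2 g(\<delta>)\<^sup>2 disc(g)\<close> and \<open>C\<^sub>0 = \<delta> L\<^sub>1\<close> are polynomial identities. Hence \<open>L\<^sub>1 > 0\<close> forces
  \<open>\<delta> = C\<^sub>0/L\<^sub>1\<close> to be real, \<open>g\<close> to have real coefficients and positive discriminant, i.e. three distinct
  real roots, none equal to \<open>\<delta>\<close>. Finally \<open>f(y + d) = y\<^sup>2 (y\<^sup>3 + (p + 5d) y\<^sup>2 + F\<^sub>1 y + F\<^sub>2)\<close>, so \<open>F\<^sub>1\<close>,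
  \<open>-F\<^sub>2\<close> and \<open>F\<^sub>3 = 9e\<^sub>3 - e\<^sub>1e\<^sub>2\<close> are symmetric functions of the shifted simple roots \<open>y\<^sub>i - d\<close>, and their
  signs locate \<open>0\<close> among these.\<close>

definition L1_ring :: "'a::comm_ring_1 \<Rightarrow> 'a \<Rightarrow> 'a \<Rightarrow> 'a \<Rightarrow> 'a \<Rightarrow> 'a" where
  "L1_ring p q r s t = -264*p*s^2*r-12*p^3*t*q^2+36*r^3*p*q-124*s*r*p*q^2+28*s*r*p^3*q+260*s*p*t*q-132*p^2*q*r*t+240*p*r^2*t+234*s*q*r^2+32*p^4*t*r+48*p*t*q^3-56*s*p^3*t-80*q^2*r*t+194*q*s^2*p^2-600*s*t*r-6*q^3*s*p^2+2*p^2*q^2*r^2-12*s*r^2*p^2-54*r^4+320*s^3-8*q^3*r^2-8*r^3*p^3+250*q*t^2-176*q^2*s^2+24*q^4*s-36*p^4*s^2-100*p^2*t^2"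

definition C0_ring :: "'a::comm_ring_1 \<Rightarrow> 'a \<Rightarrow> 'a \<Rightarrow> 'a \<Rightarrow> 'a \<Rightarrow> 'a" where
  "C0_ring p q r s t = 48*s*p^4*t+4*s*p^3*r^2+80*p^3*t^2-32*p^3*r*q*t-3*p^3*s^2*q+7*s^2*p^2*r-p^2*s*r*q^2-4*p^2*r^2*t+9*p^2*t*q^3-266*s*q*p^2*t+16*p*s^3+146*p*t*r*q^2-18*s*p*r^2*q+290*s*p*t*r-275*p*q*t^2+12*p*s^2*q^2+4*s*q^3*r-195*r^2*q*t+260*s*q^2*t+27*s*r^3+375*t^2*r-36*q^4*t-48*r*s^2*q-400*t*s^2"

lemma of_real_L1: "of_real (L1 p q r s t) = L1_ring (of_real p) (of_real q) (of_real r) (of_real s) (of_real t)"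
  by (simp add: L1_def L1_ring_def)

lemma L1_eq_L1_ring: "L1 = L1_ring"
  by (simp add: fun_eq_iff L1_def L1_ring_def)

lemma of_real_C0: "of_real (C0 p q r s t) = C0_ring (of_real p) (of_real q) (of_real r) (of_real s) (of_real t)"
  by (simp add: C0_def C0_ring_def)

text \<open>Discriminant of the monic cubic \<open>x\<^sup>3 - e\<^sub>1x\<^sup>2 + e\<^sub>2x - e\<^sub>3\<close>.\<close>

definition cubic_disc :: "'a::comm_ring_1 \<Rightarrow> 'a \<Rightarrow> 'a \<Rightarrow> 'a" where
  "cubic_disc e1 e2 e3 = e1^2*e2^2 - 4*e2^3 - 4*e1^3*e3 + 18*e1*e2*e3 - 27*e3^2"

lemma quintic_double_root_expand:
  fixes d e1 e2 e3 z :: "'a::idom"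
  shows "quintic (-e1-2*d) (e2+2*d*e1+d^2) (-e3-2*d*e2-d^2*e1) (2*d*e3+d^2*e2) (-(d^2*e3)) z
    = (z-d)^2 * (z^3 - e1*z^2 + e2*z - e3)"
  unfolding quintic_def by algebra

lemma L1_ring_double_root:
  fixes d e1 e2 e3 :: "'a::idom"
  shows "L1_ring (-e1-2*d) (e2+2*d*e1+d^2) (-e3-2*d*e2-d^2*e1) (2*d*e3+d^2*e2) (-(d^2*e3))
    = 2 * (d^3 - e1*d^2 + e2*d - e3)^2 * cubic_disc e1 e2 e3"
  unfolding L1_ring_def cubic_disc_def by algebra

lemma C0_ring_double_root:
  fixes d e1 e2 e3 :: "'a::idom"
  shows "C0_ring (-e1-2*d) (e2+2*d*e1+d^2) (-e3-2*d*e2-d^2*e1) (2*d*e3+d^2*e2) (-(d^2*e3))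
    = d * L1_ring (-e1-2*d) (e2+2*d*e1+d^2) (-e3-2*d*e2-d^2*e1) (2*d*e3+d^2*e2) (-(d^2*e3))"
  unfolding C0_ring_def L1_ring_def by algebra

lemma poly_quintic: "poly [:t, s, r, q, p, 1:] = quintic p q r s t"
  by (simp add: fun_eq_iff quintic_def algebra_simps eval_nat_numeral)

lemma quintic_eq_imp_coeffs_eq:
  fixes p q r s t p' q' r' s' t' :: "'a::{idom,ring_char_0}"
  assumes "\<forall>z. quintic p q r s t z = quintic p' q' r' s' t' z"
  shows "p = p' \<and> q = q' \<and> r = r' \<and> s = s' \<and> t = t'"
proof -
  have "poly [:t, s, r, q, p, 1:] = poly [:t', s', r', q', p', 1:]"
    using assms by (simp add: poly_quintic fun_eq_iff)
  then show ?thesis by (simp add: poly_eq_poly_eq_iff)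
qed

lemma prod_repeated_factor:
  assumes "finite A" "i \<in> A" "j \<in> A" "i \<noteq> j" "f i = f j"
  shows "(\<Prod>k\<in>A. f k) = (f i)^2 * (\<Prod>k\<in>A-{i,j}. f k)"
proof -
  have "(\<Prod>k\<in>A. f k) = f i * (\<Prod>k\<in>A-{i}. f k)"
    using assms by (simp add: prod.remove)
  also have "(\<Prod>k\<in>A-{i}. f k) = f j * (\<Prod>k\<in>A-{i}-{j}. f k)"
    using assms by (simp add: prod.remove)
  finally show ?thesis
    using assms by (simp add: power2_eq_square mult.assoc Diff_insert2[symmetric])
qed

lemma disc_roots5_eq_0_double_root:
  assumes "disc_roots5 \<alpha> = 0"
  obtains \<delta> b1 b2 b3 where "\<And>z. (\<Prod>i<5. (z - \<alpha> i)) = (z-\<delta>)^2 * (z-b1) * (z-b2) * (z-b3)"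
proof -
  from assms obtain i j where ij: "i < j" "j < 5" "\<alpha> i = \<alpha> j"
    unfolding disc_roots5_def by (auto simp: prod_zero_iff)
  have "card ({..<5::nat} - {i,j}) = 3"
    using ij by (simp add: card_Diff_subset)
  then obtain k1 k2 k3 where k: "{..<5} - {i,j} = {k1,k2,k3}" "k1 \<noteq> k2" "k2 \<noteq> k3" "k1 \<noteq> k3"
    by (auto simp: card_3_iff)
  have "(\<Prod>k<5. (z - \<alpha> k)) = (z - \<alpha> i)^2 * (z - \<alpha> k1) * (z - \<alpha> k2) * (z - \<alpha> k3)" for z
    using prod_repeated_factor[of "{..<5}" i j "\<lambda>k. z - \<alpha> k"] ij k by (simp add: mult.assoc)
  then show ?thesis by (rule that)
qed

lemma monic_cubic_real_root:
  fixes e1 e2 e3 :: real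
  obtains y where "y^3 - e1*y^2 + e2*y - e3 = 0"
proof -
  define g where "g x = x^3 - e1*x^2 + e2*x - e3" for x
  define M where "M = 1 + \<bar>e1\<bar> + \<bar>e2\<bar> + \<bar>e3\<bar>"
  have M1: "1 \<le> M" unfolding M_def by simp
  then have M2: "M \<le> M^2" by (simp add: power2_eq_square)
  \<comment> \<open>\<open>g(\<pm>M)\<close> has the sign of \<open>\<pm>M\<^sup>3\<close> because \<open>M\<^sup>3 = M\<^sup>2(1 + |e\<^sub>1| + |e\<^sub>2| + |e\<^sub>3|)\<close> dominates the other terms.\<close>
  have b1: "\<bar>e1*M^2\<bar> \<le> \<bar>e1\<bar>*M^2" by (simp add: abs_mult)
  have b2: "\<bar>e2*M\<bar> \<le> \<bar>e2\<bar>*M^2" using M1 M2 by (simp add: abs_mult mult_left_mono)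
  have b3: "\<bar>e3\<bar> \<le> \<bar>e3\<bar>*M^2" using M1 M2 by (simp add: mult_le_cancel_left1)
  have M3: "M^3 = M^2 + \<bar>e1\<bar>*M^2 + \<bar>e2\<bar>*M^2 + \<bar>e3\<bar>*M^2"
    unfolding M_def by (simp add: power3_eq_cube power2_eq_square algebra_simps)
  have "g (-M) \<le> 0" "0 \<le> g M"
    unfolding g_def using b1 b2 b3 M3 by (simp_all add: abs_le_iff) (smt (verit) zero_le_power2)+
  then have "\<exists>y\<ge>-M. y \<le> M \<and> g y = 0"
    using M1 by (intro IVT) (auto simp: g_def intro!: continuous_intros)
  then show ?thesis using that unfolding g_def by blast
qed

lemma quadratic_real_roots:
  fixes u v :: real
  assumes "u^2 - 4*v > 0"
  obtains z1 z2 where "z1 < z2" "z1 + z2 = -u" "z1 * z2 = v"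
proof
  define w where "w = sqrt (u^2 - 4*v)"
  have "w > 0" "w^2 = u^2 - 4*v" using assms unfolding w_def by simp_all
  then show "(-u - w)/2 < (-u + w)/2" "(-u - w)/2 + (-u + w)/2 = -u" "(-u - w)/2 * ((-u + w)/2) = v"
    by (simp_all add: field_simps power2_eq_square)
qed

lemma cubic_disc_pos_three_real_roots:
  fixes e1 e2 e3 :: real
  assumes "cubic_disc e1 e2 e3 > 0"
  obtains y1 y2 y3 where "y1 < y2" "y2 < y3"
    "e1 = y1+y2+y3" "e2 = y1*y2+y1*y3+y2*y3" "e3 = y1*y2*y3"
proof -
  obtain y where "y^3 - e1*y^2 + e2*y - e3 = 0"
    by (rule monic_cubic_real_root)
  then have e3: "e3 = y^3 - e1*y^2 + e2*y" by linarith
  \<comment> \<open>the cubic is \<open>(x - y)(x\<^sup>2 + ux + v)\<close>, and its discriminant splits accordingly\<close>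
  define u where "u = y - e1"
  define v where "v = y^2 - e1*y + e2"
  have disc: "cubic_disc e1 e2 e3 = (u^2 - 4*v) * (y^2 + u*y + v)^2"
    unfolding cubic_disc_def e3 u_def v_def by algebra
  with assms have "u^2 - 4*v > 0" and "y^2 + u*y + v \<noteq> 0"
    by (auto simp: zero_less_mult_iff)
  moreover obtain z1 z2 where z: "z1 < z2" "z1 + z2 = -u" "z1 * z2 = v"
    using quadratic_real_roots \<open>u^2 - 4*v > 0\<close> by blast
  moreover have "y^2 + u*y + v = (y-z1)*(y-z2)"
    using z(2,3) by algebra
  ultimately have "y \<noteq> z1" "y \<noteq> z2" by auto
  have sym: "e1 = y+z1+z2" "e2 = y*z1+y*z2+z1*z2" "e3 = y*z1*z2"
    using z(2,3) unfolding e3 u_def v_def by algebra+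
  consider "y < z1" | "z1 < y" "y < z2" | "z2 < y"
    using \<open>y \<noteq> z1\<close> \<open>y \<noteq> z2\<close> z(1) by linarith
  then show ?thesis
  proof cases
    case 1 with z(1) sym show ?thesis by (intro that[of y z1 z2]) auto
  next
    case 2 with sym show ?thesis by (intro that[of z1 y z2]) (auto simp: algebra_simps)
  next
    case 3 with z(1) sym show ?thesis by (intro that[of z1 z2 y]) (auto simp: algebra_simps)
  qed
qed

lemma nine_prod_less_sum_mult_pairs_pos:
  fixes a b c :: real
  assumes "0 < a" "a < b" "b < c"
  shows "9*(a*b*c) < (a+b+c)*(a*b+a*c+b*c)"
proof -
  have "(a+b+c)*(a*b+a*c+b*c) - 9*(a*b*c) = a*(b-c)^2 + b*(c-a)^2 + c*(a-b)^2"
    by algebra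
  moreover have "0 < c*(a-b)^2" "0 \<le> a*(b-c)^2" "0 \<le> b*(c-a)^2"
    using assms by simp_all
  ultimately show ?thesis by linarith
qed

lemma nine_prod_less_sum_mult_pairs_mixed:
  fixes a b c :: real
  assumes "a < 0" "0 < b" "b < c" "0 < a*b+a*c+b*c"
  shows "9*(a*b*c) < (a+b+c)*(a*b+a*c+b*c)"
proof -
  have "-a*(b+c) < b*c" using assms(4) by (simp add: algebra_simps)
  also have "b*c < (b+c)*(b+c)" using assms(2,3) by (simp add: algebra_simps add_pos_pos)
  finally have "(-a)*(b+c) < (b+c)*(b+c)" by simp
  then have "-a < b+c" using assms(2,3) mult_less_cancel_right[of "-a" "b+c" "b+c"] by simp
  then have "0 < (a+b+c)*(a*b+a*c+b*c)" using assms(4) by simp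
  moreover have "a*b*c < 0" using assms(1-3) by (simp add: mult_neg_pos)
  ultimately show ?thesis by linarith
qed

text \<open>The cases with \<open>b < 0\<close> reduce to the others under \<open>(a, b, c) \<mapsto> (-c, -b, -a)\<close>.\<close>

lemma zero_position_among_three:
  fixes a b c :: real
  assumes "a < b" "b < c" "a \<noteq> 0" "b \<noteq> 0" "c \<noteq> 0"
  defines "e1 \<equiv> a+b+c" and "e2 \<equiv> a*b+a*c+b*c" and "e3 \<equiv> a*b*c"
  shows "(e2 > 0 \<and> e3 > 0 \<and> 9*e3 < e1*e2 \<longrightarrow> 0 < a)
    \<and> (e2 > 0 \<and> e3 < 0 \<and> 9*e3 > e1*e2 \<longrightarrow> c < 0)
    \<and> (e3 < 0 \<and> (e2 \<le> 0 \<or> 9*e3 \<le> e1*e2) \<longrightarrow> a < 0 \<and> 0 < b)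
    \<and> (e3 > 0 \<and> (e2 \<le> 0 \<or> 9*e3 \<ge> e1*e2) \<longrightarrow> b < 0 \<and> 0 < c)"
proof -
  consider "0 < a" | "a < 0" "0 < b" | "b < 0" "0 < c" | "c < 0"
    using assms(1-5) by linarith
  then show ?thesis
  proof cases
    case 1
    then have "e2 > 0" "e3 > 0" "9*e3 < e1*e2"
      using assms(1,2) nine_prod_less_sum_mult_pairs_pos[of a b c]
      unfolding e1_def e2_def e3_def by (simp_all add: add_pos_pos)
    with 1 show ?thesis by auto
  next
    case 2
    then have "e3 < 0" "e2 > 0 \<longrightarrow> 9*e3 < e1*e2"
      using assms(2) nine_prod_less_sum_mult_pairs_mixed[of a b c]
      unfolding e1_def e2_def e3_def by (simp_all add: mult_neg_pos)
    with 2 show ?thesis by auto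
  next
    case 3
    then have "e3 > 0"
      using assms(1) unfolding e3_def by (simp add: mult_neg_neg)
    moreover have "e2 > 0 \<longrightarrow> 9*e3 > e1*e2"
      using 3 assms(1) nine_prod_less_sum_mult_pairs_mixed[of "-c" "-b" "-a"]
      unfolding e1_def e2_def e3_def by (auto simp: algebra_simps)
    ultimately show ?thesis using 3 assms(1) by auto
  next
    case 4
    then have "0 < a*b" "0 < a*c" "0 < b*c"
      using assms(1,2) by (simp_all add: mult_neg_neg)
    then have "e2 > 0" "e3 < 0"
      using 4 unfolding e2_def e3_def by (simp_all add: mult_pos_neg)
    moreover have "9*e3 > e1*e2"
      using 4 assms(1,2) nine_prod_less_sum_mult_pairs_pos[of "-c" "-b" "-a"]
      unfolding e1_def e2_def e3_def by (auto simp: algebra_simps)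
    ultimately show ?thesis using 4 assms(1,2) by auto
  qed
qed

lemma quintic_double_root_real:
  fixes p q r s t :: real and \<delta> e1 e2 e3 :: complex
  assumes fac: "\<And>z. quintic (of_real p) (of_real q) (of_real r) (of_real s) (of_real t) z
      = (z-\<delta>)^2 * (z^3 - e1*z^2 + e2*z - e3)"
    and L1_pos: "L1 p q r s t > 0"
  defines "d \<equiv> C0 p q r s t / L1 p q r s t"
  obtains E1 E2 E3 where "\<And>x. quintic p q r s t x = (x-d)^2 * (x^3 - E1*x^2 + E2*x - E3)"
    and "cubic_disc E1 E2 E3 > 0" and "d^3 - E1*d^2 + E2*d - E3 \<noteq> 0"
proof -
  have "\<forall>z. quintic (of_real p) (of_real q) (of_real r) (of_real s) (of_real t) z
      = quintic (-e1-2*\<delta>) (e2+2*\<delta>*e1+\<delta>^2) (-e3-2*\<delta>*e2-\<delta>^2*e1) (2*\<delta>*e3+\<delta>^2*e2) (-(\<delta>^2*e3)) z"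
    by (simp add: fac quintic_double_root_expand)
  then have cp: "of_real p = -e1-2*\<delta>" and cq: "of_real q = e2+2*\<delta>*e1+\<delta>^2"
    and cr: "of_real r = -e3-2*\<delta>*e2-\<delta>^2*e1" and cs: "of_real s = 2*\<delta>*e3+\<delta>^2*e2"
    and ct: "of_real t = -(\<delta>^2*e3)"
    by (auto dest: quintic_eq_imp_coeffs_eq)
  have "of_real (C0 p q r s t) = \<delta> * of_real (L1 p q r s t)"
    unfolding of_real_C0 of_real_L1 cp cq cr cs ct by (rule C0_ring_double_root)
  then have \<delta>: "\<delta> = of_real d"
    using L1_pos by (simp add: d_def field_simps)
  define E1 where "E1 = -p-2*d"
  define E2 where "E2 = q-2*d*E1-d^2"
  define E3 where "E3 = -r-2*d*E2-d^2*E1"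
  have e: "e1 = of_real E1" "e2 = of_real E2" "e3 = of_real E3"
    using cp cq cr unfolding E1_def E2_def E3_def \<delta> by simp_all
  have "(of_real s :: complex) = of_real (2*d*E3+d^2*E2)" "(of_real t :: complex) = of_real (-(d^2*E3))"
    using cs ct by (simp_all add: \<delta> e)
  then have coeffs: "p = -E1-2*d" "q = E2+2*d*E1+d^2" "r = -E3-2*d*E2-d^2*E1"
      "s = 2*d*E3+d^2*E2" "t = -(d^2*E3)"
    unfolding of_real_eq_iff by (simp_all add: E1_def E2_def E3_def)
  show ?thesis
  proof
    show "quintic p q r s t x = (x-d)^2 * (x^3 - E1*x^2 + E2*x - E3)" for x
      unfolding coeffs by (rule quintic_double_root_expand)
    have "0 < 2 * (d^3 - E1*d^2 + E2*d - E3)^2 * cubic_disc E1 E2 E3"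
      using L1_pos unfolding L1_eq_L1_ring coeffs L1_ring_double_root .
    then show "cubic_disc E1 E2 E3 > 0" and "d^3 - E1*d^2 + E2*d - E3 \<noteq> 0"
      by (auto simp: zero_less_mult_iff)
  qed
qed

lemma quintic_double_root_position:
  fixes p q r s t d y1 y2 y3 :: real
  assumes "y1 < y2" "y2 < y3" "d \<noteq> y1" "d \<noteq> y2" "d \<noteq> y3"
    and fac: "\<And>x. quintic p q r s t x = (x-d)^2 * (x-y1) * (x-y2) * (x-y3)"
  defines "F1 \<equiv> q + 4*p*d + 10*d^2"
    and "F2 \<equiv> r + 3*q*d + 6*p*d^2 + 10*d^3"
    and "F3 \<equiv> p*q + 4*p^2*d - 24*p*d^2 - 22*q*d - 40*d^3 - 9*r"
  shows "(F1 > 0 \<and> F2 < 0 \<and> F3 < 0 \<longrightarrow> d < y1) \<and>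
         (F1 > 0 \<and> F2 > 0 \<and> F3 > 0 \<longrightarrow> y3 < d) \<and>
         (F2 > 0 \<and> (F1 \<le> 0 \<or> F3 \<le> 0) \<longrightarrow> y1 < d \<and> d < y2) \<and>
         (F2 < 0 \<and> (F1 \<le> 0 \<or> F3 \<ge> 0) \<longrightarrow> y2 < d \<and> d < y3)"
proof -
  define e1 e2 e3 where "e1 = y1+y2+y3" and "e2 = y1*y2+y1*y3+y2*y3" and "e3 = y1*y2*y3"
  have "\<forall>x. quintic p q r s t x
      = quintic (-e1-2*d) (e2+2*d*e1+d^2) (-e3-2*d*e2-d^2*e1) (2*d*e3+d^2*e2) (-(d^2*e3)) x"
    unfolding fac quintic_double_root_expand e1_def e2_def e3_def by algebra
  then have p: "p = -e1-2*d" and q: "q = e2+2*d*e1+d^2" and r: "r = -e3-2*d*e2-d^2*e1"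
    by (auto dest: quintic_eq_imp_coeffs_eq)
  define a1 a2 a3 where "a1 = y1-d" and "a2 = y2-d" and "a3 = y3-d"
  have "F1 = a1*a2+a1*a3+a2*a3" "F2 = -(a1*a2*a3)"
      "F3 = 9*(a1*a2*a3) - (a1+a2+a3)*(a1*a2+a1*a3+a2*a3)"
    unfolding F1_def F2_def F3_def p q r e1_def e2_def e3_def a1_def a2_def a3_def by algebra+
  moreover have "a1 < a2" "a2 < a3" "a1 \<noteq> 0" "a2 \<noteq> 0" "a3 \<noteq> 0"
    using assms(1-5) unfolding a1_def a2_def a3_def by auto
  ultimately show ?thesis
    using zero_position_among_three[of a1 a2 a3] unfolding a1_def a2_def a3_def by auto
qed

theorem mainTheorem8:
  fixes p q r s t :: real and \<alpha> :: "nat \<Rightarrow> complex"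
  assumes roots: "\<forall>z::complex. quintic (of_real p) (of_real q) (of_real r) (of_real s) (of_real t) z
                     = (\<Prod>i<5. (z - \<alpha> i))"
    and D0: "disc_roots5 \<alpha> = 0"
    and L1pos: "L1 p q r s t > 0"
  shows "let d = C0 p q r s t / L1 p q r s t;
             F1 = q + 4*p*d + 10*d^2;
             F2 = r + 3*q*d + 6*p*d^2 + 10*d^3;
             F3 = p*q + 4*p^2*d - 24*p*d^2 - 22*q*d - 40*d^3 - 9*r
         in \<exists>y1 y2 y3::real. y1 < y2 \<and> y2 < y3 \<and> d \<noteq> y1 \<and> d \<noteq> y2 \<and> d \<noteq> y3 \<and>
              (\<forall>x::real. quintic p q r s t x = (x - d)^2 * (x - y1) * (x - y2) * (x - y3)) \<and>
              (F1 > 0 \<and> F2 < 0 \<and> F3 < 0 \<longrightarrow> d < y1) \<and>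
              (F1 > 0 \<and> F2 > 0 \<and> F3 > 0 \<longrightarrow> y3 < d) \<and>
              (F2 > 0 \<and> (F1 \<le> 0 \<or> F3 \<le> 0) \<longrightarrow> y1 < d \<and> d < y2) \<and>
              (F2 < 0 \<and> (F1 \<le> 0 \<or> F3 \<ge> 0) \<longrightarrow> y2 < d \<and> d < y3)"
proof -
  define d where "d = C0 p q r s t / L1 p q r s t"
  obtain \<delta> b1 b2 b3 where double: "\<And>z. (\<Prod>i<5. (z - \<alpha> i)) = (z-\<delta>)^2 * (z-b1) * (z-b2) * (z-b3)"
    using disc_roots5_eq_0_double_root[OF D0] by blast
  have "quintic (of_real p) (of_real q) (of_real r) (of_real s) (of_real t) z
      = (z-\<delta>)^2 * (z^3 - (b1+b2+b3)*z^2 + (b1*b2+b1*b3+b2*b3)*z - b1*b2*b3)" for z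
    unfolding roots[rule_format] double by algebra
  then obtain E1 E2 E3 where fac: "\<And>x. quintic p q r s t x = (x-d)^2 * (x^3 - E1*x^2 + E2*x - E3)"
    and disc: "cubic_disc E1 E2 E3 > 0" and simple: "d^3 - E1*d^2 + E2*d - E3 \<noteq> 0"
    using quintic_double_root_real L1pos unfolding d_def by blast
  obtain y1 y2 y3 where y: "y1 < y2" "y2 < y3"
      and E: "E1 = y1+y2+y3" "E2 = y1*y2+y1*y3+y2*y3" "E3 = y1*y2*y3"
    using cubic_disc_pos_three_real_roots[OF disc] by blast
  have cubic: "x^3 - E1*x^2 + E2*x - E3 = (x-y1)*(x-y2)*(x-y3)" for x
    unfolding E by algebra
  have "d \<noteq> y1" "d \<noteq> y2" "d \<noteq> y3"
    using simple unfolding cubic by auto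
  moreover have "\<And>x. quintic p q r s t x = (x-d)^2 * (x-y1) * (x-y2) * (x-y3)"
    unfolding fac cubic by (simp add: mult.assoc)
  ultimately show ?thesis
    unfolding Let_def d_def[symmetric] using y quintic_double_root_position[of y1 y2 y3 d] by blast
qed

end
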